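(* Let $X=(x_{i,j})$ and $Y=(y_{i,j})$ be arbitrary elements of $FT_n(M)$. (i) $v_M(X)=+\infty$ if and only if $X$ is diagonal. (ii) $\tilde v_M(X)\ge v_M(X)$. (iii) For any $i,j\in\mathbb F_p$, $v_M(iX+jY)\ge\min(v_M(X),v_M(Y))$ and $\tilde v_M(iX+jY)\ge\min(\tilde v_M(X),\tilde v_M(Y))$; in particular adding integer multiples of $I$ does not change $v_M$ or $\tilde v_M$. (iv) $v_M(X^{(p)})=p\,v_M(X)$ and $\tilde v_M(X^{(p)})=p\,\tilde v_M(X)$. (v) $v_M(XY)\ge\min(v_M(X),v_M(Y))$ and $\tilde v_M(XY)\ge\min(\tilde v_M(X),\tilde v_M(Y))$. (vi) If $X$ is nilpotent (i.e. not invertible), then $v_M(XY)\ge\min(v_M(X),\tilde v_M(Y))$ and $v_M(YX)\ge\min(v_M(X),\tilde v_M(Y))$. (vii) If $X$ and $Y$ are both nilpotent, then $v_M(XY)\ge\min(\tilde v_M(X),\tilde v_M(Y))$. (viii) If $X$ is invertible and $v_M(X)>v_M(Y)$, then $v_M(XY)=v_M(YX)=v_M(Y)$. (ix) If $X$ is invertible and $\tilde v_M(X)>\tilde v_M(Y)$, then $\tilde v_M(XY)=\tilde v_M(YX)=\tilde v_M(Y)$. (x) If $X$ is invertible, then $v_M(X^{-1})=v_M(X)$ and $\tilde v_M(X^{-1})=\tilde v_M(X)$. (xi) Let $c$ be an integer, suppose $X$ is nilpotent, and let $\gamma\in M$ with $v_M(\gamma)=c$. Then $v_M(\gamma X)\ge\min\big(\tfrac{c}{n-1},c\big)+v_M(X)$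 and (when $n\ge3$) $\tilde v_M(\gamma X)\ge\min\big(\tfrac{c}{n-2},c\big)+\tilde v_M(X)$.
   Context: Let $p$ be a prime and $M$ a discrete valuation field of characteristic $p$ with valuation $v_M$ (and $v_M(0)=+\infty$). Let $n\ge2$. $NT_n(M)$ denotes the strictly upper triangular $n\times n$ matrices over $M$, and $FT_n(M)=\{cI+X: c\in\mathbb F_p,\ X\in NT_n(M)\}$, a subring of $M_n(M)$ consisting of upper triangular matrices whose diagonal entries are all equal to one element of $\mathbb F_p$. For $X=(x_{i,j})\in FT_n(M)$ define $v_M(X)=\min_{1\le i<j\le n}\frac{v_M(x_{i,j})}{j-i}$ and $\tilde v_M(X)=\min_{1\le i<j\le n,\ (i,j)\ne(1,n)}\frac{v_M(x_{i,j})}{j-i}$ (values in $\mathbb Q\cup\{+\infty\}$). $X^{(p)}$ denotes the matrix obtained by raising every entry of $X$ to the $p$-th power. *)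

theory Defs
  imports "HOL-Library.Extended_Real" "Jordan_Normal_Form.Matrix"
begin

definition discrete_valuation :: "('a::field \<Rightarrow> ereal) \<Rightarrow> bool" where
  "discrete_valuation v \<longleftrightarrow>
     (\<forall>x. v x = \<infinity> \<longleftrightarrow> x = 0) \<and>
     (\<forall>x. x \<noteq> 0 \<longrightarrow> (\<exists>k::int. v x = ereal (of_int k))) \<and>
     (\<forall>x y. v (x * y) = v x + v y) \<and>
     (\<forall>x y. min (v x) (v y) \<le> v (x + y)) \<and>
     (\<forall>k::int. \<exists>x. v x = ereal (of_int k))"

text \<open>FT_n(M): n x n upper triangular matrices whose diagonal entries all equal one
  element of the prime field F_p (= the image of the naturals in M).\<close>
definition FT :: "nat \<Rightarrow> 'a::field mat set" where
  "FT n = {X \<in> carrier_mat n n.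
             (\<exists>c::nat. \<forall>i<n. X $$ (i, i) = of_nat c) \<and>
             (\<forall>i j. j < i \<and> i < n \<longrightarrow> X $$ (i, j) = 0)}"

text \<open>Indices are 0-based: the paper's entry (i,j) is our (i-1,j-1); the corner (1,n) is (0,n-1).
  The minimum over an empty index set is +infinity.\<close>
definition vM :: "('a::field \<Rightarrow> ereal) \<Rightarrow> nat \<Rightarrow> 'a mat \<Rightarrow> ereal" where
  "vM v n X = (INF ij \<in> {(i, j). i < j \<and> j < n}.
                 v (X $$ ij) / ereal (real (snd ij - fst ij)))"

definition vMt :: "('a::field \<Rightarrow> ereal) \<Rightarrow> nat \<Rightarrow> 'a mat \<Rightarrow> ereal" where
  "vMt v n X = (INF ij \<in> {(i, j). i < j \<and> j < n \<and> (i, j) \<noteq> (0, n - 1)}.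
                 v (X $$ ij) / ereal (real (snd ij - fst ij)))"

definition frob_mat :: "nat \<Rightarrow> 'a::field mat \<Rightarrow> 'a mat" where
  "frob_mat p X = map_mat (\<lambda>x. x ^ p) X"

definition nilpotent_mat :: "'a::field mat \<Rightarrow> bool" where
  "nilpotent_mat X \<longleftrightarrow> (\<exists>k. X ^\<^sub>m k = 0\<^sub>m (dim_row X) (dim_col X))"

definition is_diagonal_mat :: "'a::zero mat \<Rightarrow> bool" where
  "is_diagonal_mat X \<longleftrightarrow> (\<forall>i<dim_row X. \<forall>j<dim_col X. i \<noteq> j \<longrightarrow> X $$ (i, j) = 0)"

end

(*
  Write v_M as a minimum over a set P of positions (i, j), i < j, of v(x_ij)/(j - i); both v_M
  (all positions) and the tilde version (all but the corner) are of this form, with P closed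
  under passing from (i, j) to (i, k) and (k, j).  Since upper triangular products have
  (XY)_ij = sum_{i <= k <= j} x_ik y_kj and (k - i) s + (j - k) t >= (j - i) min(s, t), the
  ultrametric inequality gives the product bounds; diagonal entries lie in F_p, so they have
  valuation 0 or infinity and only matter through whether they vanish.  For invertible X write
  X = cI + N with v(c) = 0 and N strictly upper triangular: if v_M(Y) < v_M(X) = v_M(N), every
  term of NY and YN gains at least one step of the larger valuation, so XY = cY + NY has
  valuation exactly v_M(Y).  Applying this to X and X^-1 (which is again in FT_n) and using
  v_M(I) = infinity shows that X and X^-1 have the same valuation.
*)
theory Submission
  imports Defs "HOL-Number_Theory.Cong"
begin

section \<open>Discrete valuations\<close>

locale discretely_valued =
  fixes v :: "'a::field \<Rightarrow> ereal"
  assumes discrete_valuation: "discrete_valuation v"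
begin

lemma val_eq_infinity_iff: "v x = \<infinity> \<longleftrightarrow> x = 0"
  using discrete_valuation unfolding discrete_valuation_def by blast

lemma val_zero [simp]: "v 0 = \<infinity>"
  by (simp add: val_eq_infinity_iff)

lemma val_mult: "v (x * y) = v x + v y"
  using discrete_valuation unfolding discrete_valuation_def by blast

lemma val_add_ge: "min (v x) (v y) \<le> v (x + y)"
  using discrete_valuation unfolding discrete_valuation_def by blast

lemma val_neq_minf: "v x \<noteq> -\<infinity>"
  using discrete_valuation val_eq_infinity_iff unfolding discrete_valuation_def
  by (metis MInfty_neq_PInfty(1) MInfty_neq_ereal(2))

lemma val_one [simp]: "v 1 = 0"
proof -
  have "v 1 = v 1 + v 1" using val_mult[of 1 1] by simp
  then show ?thesis using val_neq_minf[of 1] val_eq_infinity_iff[of 1]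
    by (cases "v 1") (auto simp: zero_ereal_def)
qed

lemma val_eq_0_if_mult_eq_1:
  assumes "x * y = 1" and "0 \<le> v x" and "0 \<le> v y"
  shows "v x = 0"
proof -
  have "v x + v y = 0" using assms(1) val_mult val_one by metis
  then show ?thesis using assms(2,3) by (cases "v x"; cases "v y") auto
qed

lemma val_uminus [simp]: "v (- x) = v x"
proof -
  have "v (-1) + v (-1) = 0" using val_mult[of "-1" "-1"] by simp
  then have "v (-1) = 0" using val_neq_minf[of "-1"] by (cases "v (-1)") auto
  then show ?thesis using val_mult[of "-1" x] by simp
qed

lemma val_of_nat_nonneg: "0 \<le> v (of_nat a)"
proof (induction a)
  case (Suc a)
  then show ?case using val_add_ge[of 1 "of_nat a"] by (simp add: min_def split: if_splits)
qed simp

lemma val_add_eq_left: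
  assumes "v x < v y"
  shows "v (x + y) = v x"
proof -
  have "min (v (x + y)) (v y) \<le> v x"
    using val_add_ge[of "x + y" "- y"] by simp
  then show ?thesis using val_add_ge[of x y] assms by (auto simp: min_def split: if_splits)
qed

lemma val_sum_ge: "finite S \<Longrightarrow> (\<And>k. k \<in> S \<Longrightarrow> w \<le> v (f k)) \<Longrightarrow> w \<le> v (sum f S)"
proof (induction S rule: finite_induct)
  case (insert x F)
  then have "w \<le> min (v (f x)) (v (sum f F))" by auto
  also have "\<dots> \<le> v (f x + sum f F)" by (rule val_add_ge)
  finally show ?case using insert by simp
qed simp

lemma val_sum_gt:
  assumes "w \<noteq> \<infinity>"
  shows "finite S \<Longrightarrow> (\<And>k. k \<in> S \<Longrightarrow> w < v (f k)) \<Longrightarrow> w < v (sum f S)"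
proof (induction S rule: finite_induct)
  case (insert x F)
  then have "w < min (v (f x)) (v (sum f F))" by auto
  also have "\<dots> \<le> v (f x + sum f F)" by (rule val_add_ge)
  finally show ?case using insert by simp
qed (use assms in \<open>simp add: less_top\<close>)

lemma val_power: "v (x ^ k) = ereal (real k) * v x"
proof (induction k)
  case (Suc k)
  then show ?case
    using val_mult[of x "x ^ k"] val_neq_minf[of x] by (cases "v x") (auto simp: algebra_simps)
qed simp

end

lemma of_nat_inverse_in_prime_char:
  assumes "prime p" and "CHAR('a::field) = p" and "(of_nat a :: 'a) \<noteq> 0"
  obtains b where "(of_nat a :: 'a) * of_nat b = 1"
proof -
  have "coprime a p"
    using assms by (metis coprime_commute of_nat_eq_0_iff_char_dvd prime_imp_coprime)
  then obtain b where "[a * b = 1] (mod p)" using cong_solve_coprime_nat by auto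
  then have "(of_nat (a * b) :: 'a) = of_nat 1"
    using assms(2) by (simp only: of_nat_eq_iff_cong_CHAR)
  then show ?thesis using that by simp
qed

section \<open>Upper triangular matrices\<close>

lemma upper_triangular_mult_entry:
  assumes "A \<in> carrier_mat n n" and "B \<in> carrier_mat n n"
    and "upper_triangular A" "upper_triangular B" and "i < n" "j < n"
  shows "(A * B) $$ (i, j) = (\<Sum>k\<in>{i..j}. A $$ (i, k) * B $$ (k, j))"
proof -
  have "(A * B) $$ (i, j) = (\<Sum>k\<in>{0..<n}. A $$ (i, k) * B $$ (k, j))"
    using assms by (auto simp: scalar_prod_def intro!: sum.cong)
  also have "\<dots> = (\<Sum>k\<in>{i..j}. A $$ (i, k) * B $$ (k, j))"
    using assms by (intro sum.mono_neutral_right) (auto simp: not_le upper_triangular_def)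
  finally show ?thesis .
qed

lemma mult_upper_triangular_entry_0_0:
  assumes "A \<in> carrier_mat m n" and "X \<in> carrier_mat n n" and "upper_triangular X"
    and "0 < m" "0 < n"
  shows "(A * X) $$ (0, 0) = A $$ (0, 0) * X $$ (0, 0)"
proof -
  have "(A * X) $$ (0, 0) = (\<Sum>k\<in>{0..<n}. A $$ (0, k) * X $$ (k, 0))"
    using assms by (auto simp: scalar_prod_def intro!: sum.cong)
  also have "\<dots> = (\<Sum>k\<in>{0}. A $$ (0, k) * X $$ (k, 0))"
    using assms by (intro sum.mono_neutral_right) (auto simp: upper_triangular_def)
  finally show ?thesis by simp
qed

lemma upper_triangular_pow_entry_0_0:
  assumes X: "X \<in> carrier_mat n n" and "upper_triangular X" and "0 < n"
  shows "(X ^\<^sub>m k) $$ (0, 0) = X $$ (0, 0) ^ k"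
proof (induction k)
  case 0
  then show ?case using X \<open>0 < n\<close> by simp
next
  case (Suc k)
  then show ?case
    using mult_upper_triangular_entry_0_0[of "X ^\<^sub>m k" n n X] assms by (simp add: power_commutes)
qed

lemma nilpotent_upper_triangular_entry_0_0:
  assumes X: "X \<in> carrier_mat n n" and "upper_triangular X" and "0 < n" and "nilpotent_mat X"
  shows "X $$ (0, 0) = 0"
proof -
  obtain k where "X ^\<^sub>m k = 0\<^sub>m n n"
    using \<open>nilpotent_mat X\<close> X unfolding nilpotent_mat_def by auto
  then have "X $$ (0, 0) ^ k = 0"
    using upper_triangular_pow_entry_0_0[OF assms(1-3), of k] \<open>0 < n\<close> by simp
  then show ?thesis by simp
qed

lemma invertible_matE:
  assumes X: "X \<in> carrier_mat n n" and "invertible_mat X"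
  obtains B where "B \<in> carrier_mat n n" "X * B = 1\<^sub>m n" "B * X = 1\<^sub>m n"
proof -
  obtain B where XB: "X * B = 1\<^sub>m n" and BX: "B * X = 1\<^sub>m (dim_row B)"
    using assms unfolding invertible_mat_def inverts_mat_def by auto
  have "dim_col B = n" using arg_cong[OF XB, of dim_col] by simp
  moreover have "dim_row B = n" using arg_cong[OF BX, of dim_col] X by simp
  ultimately show ?thesis using that XB BX by auto
qed

lemma left_inverse_upper_triangular:
  fixes X B :: "'a::field mat"
  assumes X: "X \<in> carrier_mat n n" and B: "B \<in> carrier_mat n n" and "upper_triangular X"
    and diag: "\<And>i. i < n \<Longrightarrow> X $$ (i, i) \<noteq> 0" and BX: "B * X = 1\<^sub>m n"
  shows "upper_triangular B"
proof -
  have "B $$ (i, j) = 0" if "j < i" "i < n" for i j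
    using that
  proof (induction j arbitrary: i rule: less_induct)
    case (less j)
    have "0 = (B * X) $$ (i, j)" using BX less.prems by simp
    also have "\<dots> = (\<Sum>k\<in>{0..<n}. B $$ (i, k) * X $$ (k, j))"
      using B X less.prems by (auto simp: scalar_prod_def intro!: sum.cong)
    also have "\<dots> = (\<Sum>k\<in>{j}. B $$ (i, k) * X $$ (k, j))"
      using less X \<open>upper_triangular X\<close>
      by (intro sum.mono_neutral_right) (auto simp: upper_triangular_def neq_iff)
    finally show "B $$ (i, j) = 0" using diag less.prems by simp
  qed
  then show ?thesis using B by auto
qed

lemma FT_carrier: "X \<in> FT n \<Longrightarrow> X \<in> carrier_mat n n"
  unfolding FT_def by simp

lemma FT_upper_triangular: "X \<in> FT n \<Longrightarrow> upper_triangular X"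
  unfolding FT_def upper_triangular_def by auto

lemma FT_diag_of_nat: "X \<in> FT n \<Longrightarrow> \<exists>c::nat. \<forall>i<n. X $$ (i, i) = of_nat c"
  unfolding FT_def by blast

lemma FT_mult_entry:
  assumes "X \<in> FT n" and "Y \<in> FT n" and "i < n" "j < n"
  shows "(X * Y) $$ (i, j) = (\<Sum>k\<in>{i..j}. X $$ (i, k) * Y $$ (k, j))"
  using assms by (intro upper_triangular_mult_entry FT_carrier FT_upper_triangular)

lemma FT_nilpotent_diag:
  assumes X: "X \<in> FT n" and "0 < n" and "nilpotent_mat X" and "i < n"
  shows "X $$ (i, i) = 0"
proof -
  obtain c :: nat where c: "\<forall>i<n. X $$ (i, i) = of_nat c" using FT_diag_of_nat[OF X] by blast
  have "X $$ (0, 0) = 0"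
    using FT_carrier[OF X] FT_upper_triangular[OF X] assms(2,3)
    by (rule nilpotent_upper_triangular_entry_0_0)
  then show ?thesis using c assms(2,4) by simp
qed

lemma FT_left_invertible_diag:
  fixes X B :: "'a::field mat"
  assumes "prime p" and "CHAR('a) = p"
    and X: "X \<in> FT n" and B: "B \<in> carrier_mat n n" and BX: "B * X = 1\<^sub>m n" and "0 < n"
  shows "\<exists>c b :: nat. (\<forall>i<n. X $$ (i, i) = of_nat c) \<and> (of_nat c :: 'a) * of_nat b = 1"
proof -
  obtain c :: nat where c: "\<forall>i<n. X $$ (i, i) = of_nat c" using FT_diag_of_nat[OF X] by blast
  have "B $$ (0, 0) * X $$ (0, 0) = 1"
    using mult_upper_triangular_entry_0_0[OF B FT_carrier[OF X] FT_upper_triangular[OF X]] BX \<open>0 < n\<close>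
    by simp
  then have "(of_nat c :: 'a) \<noteq> 0" using c \<open>0 < n\<close> by auto
  then obtain b where "(of_nat c :: 'a) * of_nat b = 1"
    by (rule of_nat_inverse_in_prime_char[OF assms(1,2)])
  then show ?thesis using c by blast
qed

lemma FT_left_inverse:
  fixes X B :: "'a::field mat"
  assumes "prime p" and "CHAR('a) = p"
    and X: "X \<in> FT n" and B: "B \<in> carrier_mat n n" and BX: "B * X = 1\<^sub>m n" and "0 < n"
  shows "B \<in> FT n"
proof -
  obtain c b :: nat where c: "\<forall>i<n. X $$ (i, i) = of_nat c"
    and cb: "(of_nat c :: 'a) * of_nat b = 1"
    using FT_left_invertible_diag[OF assms] by blast
  have XC: "X \<in> carrier_mat n n" and UX: "upper_triangular X"
    using X by (simp_all add: FT_carrier FT_upper_triangular)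
  have "(of_nat c :: 'a) \<noteq> 0" using cb by (metis mult_zero_left zero_neq_one)
  then have "X $$ (i, i) \<noteq> 0" if "i < n" for i using c that by simp
  then have UB: "upper_triangular B" by (rule left_inverse_upper_triangular[OF XC B UX _ BX])
  have "B $$ (i, i) = of_nat b" if "i < n" for i
  proof -
    have "B $$ (i, i) * of_nat c = 1"
      using upper_triangular_mult_entry[OF B XC UB UX that that] BX c that by simp
    then show ?thesis using cb by (metis mult.commute mult.left_neutral mult.assoc)
  qed
  then show ?thesis using B UB unfolding FT_def by auto
qed

section \<open>Valuations of matrices\<close>

definition vM_on ::
    "('a::field \<Rightarrow> ereal) \<Rightarrow> nat \<Rightarrow> (nat \<Rightarrow> nat \<Rightarrow> bool) \<Rightarrow> 'a mat \<Rightarrow> ereal" where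
  "vM_on v n P X = (INF ij \<in> {(i, j). i < j \<and> j < n \<and> P i j}.
                      v (X $$ ij) / ereal (real (snd ij - fst ij)))"

definition interval_closed :: "nat \<Rightarrow> (nat \<Rightarrow> nat \<Rightarrow> bool) \<Rightarrow> bool" where
  "interval_closed n P \<longleftrightarrow> (\<forall>i k j. i < k \<and> k < j \<and> j < n \<and> P i j \<longrightarrow> P i k \<and> P k j)"

lemma vM_eq_vM_on: "vM v n = vM_on v n (\<lambda>_ _. True)"
  unfolding vM_def vM_on_def by simp

lemma vMt_eq_vM_on: "vMt v n = vM_on v n (\<lambda>i j. (i, j) \<noteq> (0, n - 1))"
  unfolding vMt_def vM_on_def by simp

lemma interval_closed_True: "interval_closed n (\<lambda>_ _. True)"
  unfolding interval_closed_def by simp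

lemma interval_closed_off_corner: "interval_closed n (\<lambda>i j. (i, j) \<noteq> (0, n - 1))"
  unfolding interval_closed_def by auto

lemma interval_closedD:
  assumes "interval_closed n P" "P i j" "i \<le> k" "k \<le> j" "j < n"
  shows "i < k \<Longrightarrow> P i k" and "k < j \<Longrightarrow> P k j"
  using assms unfolding interval_closed_def by (metis le_neq_implies_less)+

lemma le_vM_on_iff:
  "t \<le> vM_on v n P X \<longleftrightarrow>
     (\<forall>i j. i < j \<longrightarrow> j < n \<longrightarrow> P i j \<longrightarrow> ereal (real (j - i)) * t \<le> v (X $$ (i, j)))"
  unfolding vM_on_def le_INF_iff by (auto simp: ereal_le_divide_pos)

lemma vM_on_entry_le:
  "i < j \<Longrightarrow> j < n \<Longrightarrow> P i j \<Longrightarrow> ereal (real (j - i)) * vM_on v n P X \<le> v (X $$ (i, j))"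
  using le_vM_on_iff[of "vM_on v n P X" v n P X] by blast

lemma vM_on_le:
  assumes "i < j" "j < n" "P i j" and "v (X $$ (i, j)) \<le> ereal (real (j - i)) * t"
  shows "vM_on v n P X \<le> t"
proof -
  have "vM_on v n P X \<le> v (X $$ (i, j)) / ereal (real (j - i))"
    unfolding vM_on_def by (rule INF_lower2[of "(i, j)"]) (use assms in auto)
  also have "\<dots> \<le> t" using assms by (subst ereal_divide_le_pos) auto
  finally show ?thesis .
qed

lemma vM_on_antimono: "(\<And>i j. Q i j \<Longrightarrow> P i j) \<Longrightarrow> vM_on v n P X \<le> vM_on v n Q X"
  unfolding vM_on_def by (rule INF_superset_mono) auto

lemma vM_on_attained:
  "vM_on v n P X = \<infinity> \<or>
     (\<exists>i j. i < j \<and> j < n \<and> P i j \<and> ereal (real (j - i)) * vM_on v n P X = v (X $$ (i, j)))"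
proof (cases "{(i, j). i < j \<and> j < n \<and> P i j} = {}")
  case True
  have "vM_on v n P X = \<infinity>" unfolding vM_on_def True by (simp add: top_ereal_def)
  then show ?thesis ..
next
  case False
  let ?S = "{(i, j). i < j \<and> j < n \<and> P i j}"
  let ?f = "\<lambda>ij. v (X $$ ij) / ereal (real (snd ij - fst ij))"
  have "finite ?S" by (rule finite_subset[of _ "{..<n} \<times> {..<n}"]) auto
  then have "vM_on v n P X \<in> ?f ` ?S"
    unfolding vM_on_def using False by (simp add: cInf_eq_Min)
  then obtain i j where "i < j" "j < n" "P i j"
    and min: "vM_on v n P X = v (X $$ (i, j)) / ereal (real (j - i))" by auto
  from min have "ereal (real (j - i)) * vM_on v n P X = v (X $$ (i, j))"
    using \<open>i < j\<close> by (cases "v (X $$ (i, j))") auto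
  then show ?thesis using \<open>i < j\<close> \<open>j < n\<close> \<open>P i j\<close> by blast
qed

lemma vM_on_add_scalar_one:
  "X \<in> carrier_mat n n \<Longrightarrow> vM_on v n P (X + a \<cdot>\<^sub>m 1\<^sub>m n) = vM_on v n P X"
  unfolding vM_on_def by (rule INF_cong) auto

lemma ereal_split_min_le:
  assumes "i \<le> k" "k \<le> j"
  shows "ereal (real (j - i)) * min s t \<le> ereal (real (k - i)) * s + ereal (real (j - k)) * t"
proof -
  have "ereal (real (j - i)) * min s t = ereal (real (k - i)) * min s t + ereal (real (j - k)) * min s t"
    using assms by (cases "min s t") (auto simp: algebra_simps)
  also have "\<dots> \<le> ereal (real (k - i)) * s + ereal (real (j - k)) * t"
    by (intro add_mono ereal_mult_left_mono) auto
  finally show ?thesis .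
qed

lemma ereal_split_less_left:
  assumes "i < k" "k \<le> j" "t < s" "t \<noteq> -\<infinity>"
  shows "ereal (real (j - i)) * t < ereal (real (k - i)) * s + ereal (real (j - k)) * t"
proof -
  have "ereal (real (j - i)) * t = ereal (real (k - i)) * t + ereal (real (j - k)) * t"
    using assms by (cases t) (auto simp: algebra_simps)
  also have "\<dots> < ereal (real (k - i)) * s + ereal (real (j - k)) * t"
    using assms by (cases s; cases t) auto
  finally show ?thesis .
qed

lemma ereal_split_less_right:
  assumes "i \<le> k" "k < j" "t < s" "t \<noteq> -\<infinity>"
  shows "ereal (real (j - i)) * t < ereal (real (k - i)) * t + ereal (real (j - k)) * s"
proof -
  have "ereal (real (j - i)) * t = ereal (real (k - i)) * t + ereal (real (j - k)) * t"
    using assms by (cases t) (auto simp: algebra_simps)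
  also have "\<dots> < ereal (real (k - i)) * t + ereal (real (j - k)) * s"
    using assms by (cases s; cases t) auto
  finally show ?thesis .
qed

lemma mult_min_div_le:
  fixes c d m :: real
  assumes "1 \<le> d" "d \<le> m"
  shows "d * min (c / m) c \<le> c"
proof (cases "c \<ge> 0")
  case True
  have "d * min (c / m) c \<le> d * (c / m)" using assms by (intro mult_left_mono) auto
  also have "\<dots> \<le> c" using assms True mult_right_mono[of d m c] by (simp add: field_simps)
  finally show ?thesis .
next
  case False
  have "d * min (c / m) c \<le> d * c" using assms by (intro mult_left_mono) auto
  also have "\<dots> \<le> c" using assms False by (simp add: mult_le_cancel_right1)
  finally show ?thesis .
qed

context discretely_valued
begin

lemma vM_on_neq_minf: "vM_on v n P X \<noteq> -\<infinity>"
  using vM_on_attained[of v n P X] val_neq_minf by force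

lemma vM_on_eq_infinity_iff:
  "vM_on v n P X = \<infinity> \<longleftrightarrow> (\<forall>i j. i < j \<longrightarrow> j < n \<longrightarrow> P i j \<longrightarrow> X $$ (i, j) = 0)"
  using le_vM_on_iff[of \<infinity> v n P X] val_eq_infinity_iff by (auto simp: top_unique)

lemma vM_on_one_mat: "vM_on v n P (1\<^sub>m n) = \<infinity>"
  by (simp add: vM_on_eq_infinity_iff)

lemma less_vM_on_if:
  assumes "t \<noteq> \<infinity>"
    and "\<And>i j. i < j \<Longrightarrow> j < n \<Longrightarrow> P i j \<Longrightarrow> ereal (real (j - i)) * t < v (X $$ (i, j))"
  shows "t < vM_on v n P X"
proof (rule ccontr)
  assume "\<not> t < vM_on v n P X"
  then have le: "vM_on v n P X \<le> t" by simp
  then obtain i j where "i < j" "j < n" "P i j"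
    and attained: "ereal (real (j - i)) * vM_on v n P X = v (X $$ (i, j))"
    using vM_on_attained[of v n P X] assms(1) by (auto simp: top_unique)
  have "ereal (real (j - i)) * vM_on v n P X \<le> ereal (real (j - i)) * t"
    using le by (rule ereal_mult_left_mono) simp
  then show False using assms(2)[OF \<open>i < j\<close> \<open>j < n\<close> \<open>P i j\<close>] attained by simp
qed

lemma vM_on_add_ge:
  assumes "X \<in> carrier_mat n n" and "Y \<in> carrier_mat n n"
  shows "min (vM_on v n P X) (vM_on v n P Y) \<le> vM_on v n P (X + Y)"
  unfolding le_vM_on_iff
proof (intro allI impI)
  fix i j assume ij: "i < j" "j < n" "P i j"
  let ?d = "ereal (real (j - i))"
  have "?d * min (vM_on v n P X) (vM_on v n P Y) \<le> v (Z $$ (i, j))"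
    if "Z = X \<or> Z = Y" for Z
  proof -
    have "?d * min (vM_on v n P X) (vM_on v n P Y) \<le> ?d * vM_on v n P Z"
      using that by (intro ereal_mult_left_mono) auto
    also have "\<dots> \<le> v (Z $$ (i, j))" using ij by (rule vM_on_entry_le)
    finally show ?thesis .
  qed
  then have "?d * min (vM_on v n P X) (vM_on v n P Y) \<le> min (v (X $$ (i, j))) (v (Y $$ (i, j)))"
    by simp
  also have "\<dots> \<le> v ((X + Y) $$ (i, j))"
    using ij assms val_add_ge by simp
  finally show "?d * min (vM_on v n P X) (vM_on v n P Y) \<le> v ((X + Y) $$ (i, j))" .
qed

lemma vM_on_smult_ge:
  assumes X: "X \<in> carrier_mat n n" and \<gamma>: "ereal c \<le> v \<gamma>"
    and weights: "\<And>i j. i < j \<Longrightarrow> j < n \<Longrightarrow> P i j \<Longrightarrow> real (j - i) * m \<le> c"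
  shows "ereal m + vM_on v n P X \<le> vM_on v n P (\<gamma> \<cdot>\<^sub>m X)"
  unfolding le_vM_on_iff
proof (intro allI impI)
  fix i j assume ij: "i < j" "j < n" "P i j"
  have "ereal (real (j - i)) * (ereal m + vM_on v n P X)
      = ereal (real (j - i) * m) + ereal (real (j - i)) * vM_on v n P X"
    using vM_on_neq_minf by (cases "vM_on v n P X") (auto simp: algebra_simps)
  also have "\<dots> \<le> v \<gamma> + v (X $$ (i, j))"
  proof (rule add_mono)
    show "ereal (real (j - i) * m) \<le> v \<gamma>"
      using weights[OF ij] \<gamma> by (meson ereal_less_eq(3) order_trans)
  qed (use ij vM_on_entry_le in blast)
  also have "\<dots> = v ((\<gamma> \<cdot>\<^sub>m X) $$ (i, j))" using ij X val_mult by simp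
  finally show "ereal (real (j - i)) * (ereal m + vM_on v n P X) \<le> v ((\<gamma> \<cdot>\<^sub>m X) $$ (i, j))" .
qed

lemma vM_on_of_nat_combination_ge:
  assumes X: "X \<in> carrier_mat n n" and Y: "Y \<in> carrier_mat n n"
  shows "min (vM_on v n P X) (vM_on v n P Y) \<le> vM_on v n P (of_nat a \<cdot>\<^sub>m X + of_nat b \<cdot>\<^sub>m Y)"
proof -
  have "vM_on v n P Z \<le> vM_on v n P (of_nat k \<cdot>\<^sub>m Z)" if "Z \<in> carrier_mat n n" for Z k
    using vM_on_smult_ge[OF that, of 0 "of_nat k" P 0] val_of_nat_nonneg by (simp flip: zero_ereal_def)
  then have "min (vM_on v n P X) (vM_on v n P Y)
      \<le> min (vM_on v n P (of_nat a \<cdot>\<^sub>m X)) (vM_on v n P (of_nat b \<cdot>\<^sub>m Y))"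
    using X Y by (intro min.mono)
  also have "\<dots> \<le> vM_on v n P (of_nat a \<cdot>\<^sub>m X + of_nat b \<cdot>\<^sub>m Y)"
    using X Y by (intro vM_on_add_ge) simp_all
  finally show ?thesis .
qed

lemma vM_on_smult_unit:
  assumes "X \<in> carrier_mat n n" and "v a = 0"
  shows "vM_on v n P (a \<cdot>\<^sub>m X) = vM_on v n P X"
  unfolding vM_on_def by (rule INF_cong) (use assms in \<open>auto simp: val_mult\<close>)

lemma vM_on_add_eq_left:
  assumes X: "X \<in> carrier_mat n n" and Y: "Y \<in> carrier_mat n n"
    and less: "vM_on v n P X < vM_on v n P Y"
  shows "vM_on v n P (X + Y) = vM_on v n P X"
proof (rule antisym)
  obtain i j where ij: "i < j" "j < n" "P i j"
    and attained: "ereal (real (j - i)) * vM_on v n P X = v (X $$ (i, j))"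
    using vM_on_attained[of v n P X] less by auto
  have "v (X $$ (i, j)) < ereal (real (j - i)) * vM_on v n P Y"
    unfolding attained[symmetric] using less ij by (intro ereal_mult_strict_left_mono) auto
  also have "\<dots> \<le> v (Y $$ (i, j))" using ij by (rule vM_on_entry_le)
  finally have "v ((X + Y) $$ (i, j)) = v (X $$ (i, j))"
    using ij X Y val_add_eq_left by simp
  then show "vM_on v n P (X + Y) \<le> vM_on v n P X"
    using attained by (intro vM_on_le[of i j n P, OF ij]) simp
  show "vM_on v n P X \<le> vM_on v n P (X + Y)"
    using vM_on_add_ge[OF X Y, of P] less by simp
qed

lemma vM_on_frob_mat:
  assumes X: "X \<in> carrier_mat n n" and "p > 0"
  shows "vM_on v n P (frob_mat p X) = ereal (real p) * vM_on v n P X"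
proof (rule antisym)
  have entry: "v (frob_mat p X $$ (i, j)) = ereal (real p) * v (X $$ (i, j))"
    if "i < n" "j < n" for i j
    using that X val_power by (simp add: frob_mat_def)
  show "ereal (real p) * vM_on v n P X \<le> vM_on v n P (frob_mat p X)"
    unfolding le_vM_on_iff
  proof (intro allI impI)
    fix i j assume ij: "i < j" "j < n" "P i j"
    have "ereal (real (j - i)) * (ereal (real p) * vM_on v n P X)
        = ereal (real p) * (ereal (real (j - i)) * vM_on v n P X)"
      by (simp add: mult.left_commute)
    also have "\<dots> \<le> ereal (real p) * v (X $$ (i, j))"
      using ij by (intro ereal_mult_left_mono vM_on_entry_le) auto
    finally show "ereal (real (j - i)) * (ereal (real p) * vM_on v n P X) \<le> v (frob_mat p X $$ (i, j))"
      using ij entry by simp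
  qed
  show "vM_on v n P (frob_mat p X) \<le> ereal (real p) * vM_on v n P X"
  proof (cases "vM_on v n P X = \<infinity>")
    case True
    then show ?thesis using \<open>p > 0\<close> by simp
  next
    case False
    then obtain i j where ij: "i < j" "j < n" "P i j"
      and attained: "ereal (real (j - i)) * vM_on v n P X = v (X $$ (i, j))"
      using vM_on_attained[of v n P X] by blast
    have "v (frob_mat p X $$ (i, j)) = ereal (real (j - i)) * (ereal (real p) * vM_on v n P X)"
      using ij entry attained by (simp add: mult.left_commute)
    then show ?thesis by (intro vM_on_le[of i j n P, OF ij]) simp
  qed
qed

lemma FT_diag_val_nonneg:
  assumes "X \<in> FT n" and "i < n"
  shows "0 \<le> v (X $$ (i, i))"
  using assms val_of_nat_nonneg unfolding FT_def by auto

lemma FT_vM_on_entry_le: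
  assumes X: "X \<in> FT n" and "i \<le> j" "j < n" and "i < j \<Longrightarrow> P i j"
  shows "ereal (real (j - i)) * vM_on v n P X \<le> v (X $$ (i, j))"
  using assms vM_on_entry_le[of i j n P v X] FT_diag_val_nonneg[OF X, of i]
  by (cases "i = j") (auto simp flip: zero_ereal_def)

lemma vM_on_mult_term_ge:
  assumes "X \<in> FT n" and "Y \<in> FT n" and "i \<le> k" "k \<le> j" "j < n"
    and "i < k \<Longrightarrow> P i k" and "k < j \<Longrightarrow> Q k j"
  shows "ereal (real (k - i)) * vM_on v n P X + ereal (real (j - k)) * vM_on v n Q Y
           \<le> v (X $$ (i, k) * Y $$ (k, j))"
  unfolding val_mult using assms by (intro add_mono FT_vM_on_entry_le) auto

(* The boundary terms x_ii y_ij and x_ij y_jj put the whole weight j - i on one factor, so they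
   need Q i j, resp. P i j, unless that diagonal vanishes. *)
lemma vM_on_mult_ge:
  assumes X: "X \<in> FT n" and Y: "Y \<in> FT n"
    and diag_X: "(\<forall>i<n. X $$ (i, i) = 0) \<or> (\<forall>i j. R i j \<longrightarrow> Q i j)"
    and diag_Y: "(\<forall>i<n. Y $$ (i, i) = 0) \<or> (\<forall>i j. R i j \<longrightarrow> P i j)"
    and inner: "\<And>i k j. i < k \<Longrightarrow> k < j \<Longrightarrow> j < n \<Longrightarrow> R i j \<Longrightarrow> P i k \<and> Q k j"
  shows "min (vM_on v n P X) (vM_on v n Q Y) \<le> vM_on v n R (X * Y)"
  unfolding le_vM_on_iff
proof (intro allI impI)
  fix i j assume ij: "i < j" "j < n" "R i j"
  let ?m = "min (vM_on v n P X) (vM_on v n Q Y)"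
  have "ereal (real (j - i)) * ?m \<le> v (\<Sum>k\<in>{i..j}. X $$ (i, k) * Y $$ (k, j))"
  proof (rule val_sum_ge)
    fix k assume k: "k \<in> {i..j}"
    show "ereal (real (j - i)) * ?m \<le> v (X $$ (i, k) * Y $$ (k, j))"
    proof (cases "X $$ (i, k) * Y $$ (k, j) = 0")
      case False
      then have "(i < k \<longrightarrow> P i k) \<and> (k < j \<longrightarrow> Q k j)"
        using k ij diag_X diag_Y inner[of i k j] by (cases "k = i"; cases "k = j") auto
      then have "ereal (real (k - i)) * vM_on v n P X + ereal (real (j - k)) * vM_on v n Q Y
                   \<le> v (X $$ (i, k) * Y $$ (k, j))"
        using k ij by (intro vM_on_mult_term_ge[OF X Y]) auto
      then show ?thesis using k by (meson atLeastAtMost_iff ereal_split_min_le order_trans)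
    qed (simp del: mult_eq_0_iff)
  qed simp
  also have "(\<Sum>k\<in>{i..j}. X $$ (i, k) * Y $$ (k, j)) = (X * Y) $$ (i, j)"
    using ij by (simp add: FT_mult_entry[OF X Y])
  finally show "ereal (real (j - i)) * ?m \<le> v ((X * Y) $$ (i, j))" .
qed

lemma vM_on_mult_ge_min:
  assumes "X \<in> FT n" "Y \<in> FT n" "interval_closed n P"
  shows "min (vM_on v n P X) (vM_on v n P Y) \<le> vM_on v n P (X * Y)"
proof (rule vM_on_mult_ge[OF assms(1,2)])
  show "P i k \<and> P k j" if "i < k" "k < j" "j < n" "P i j" for i k j
    using assms(3) that unfolding interval_closed_def by blast
qed simp_all

lemma vM_on_mult_gt:
  assumes N: "N \<in> FT n" and N0: "\<And>i. i < n \<Longrightarrow> N $$ (i, i) = 0" and Y: "Y \<in> FT n"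
    and P: "interval_closed n P" and less: "vM_on v n P Y < vM_on v n P N"
  shows "vM_on v n P Y < vM_on v n P (N * Y)" and "vM_on v n P Y < vM_on v n P (Y * N)"
proof -
  let ?t = "vM_on v n P Y" and ?s = "vM_on v n P N"
  have t_fin: "?t \<noteq> \<infinity>" using less by auto
  have dt_fin: "ereal (real d) * ?t \<noteq> \<infinity>" for d
    using t_fin vM_on_neq_minf[of n P Y] by (cases ?t) auto
  show "?t < vM_on v n P (N * Y)"
  proof (rule less_vM_on_if[OF t_fin])
    fix i j assume ij: "i < j" "j < n" "P i j"
    have "ereal (real (j - i)) * ?t < v (\<Sum>k\<in>{i..j}. N $$ (i, k) * Y $$ (k, j))"
    proof (rule val_sum_gt[OF dt_fin])
      fix k assume k: "k \<in> {i..j}"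
      show "ereal (real (j - i)) * ?t < v (N $$ (i, k) * Y $$ (k, j))"
      proof (cases "k = i")
        case True
        then show ?thesis using N0 ij t_fin dt_fin by (simp add: less_top)
      next
        case False
        then have "i < k" using k by simp
        then have "ereal (real (j - i)) * ?t < ereal (real (k - i)) * ?s + ereal (real (j - k)) * ?t"
          using k less vM_on_neq_minf by (intro ereal_split_less_left) auto
        also have "\<dots> \<le> v (N $$ (i, k) * Y $$ (k, j))"
          using k ij interval_closedD[OF P \<open>P i j\<close>, of k] by (intro vM_on_mult_term_ge[OF N Y]) auto
        finally show ?thesis .
      qed
    qed simp
    then show "ereal (real (j - i)) * ?t < v ((N * Y) $$ (i, j))" using ij by (simp add: FT_mult_entry[OF N Y])
  qed
  show "?t < vM_on v n P (Y * N)"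
  proof (rule less_vM_on_if[OF t_fin])
    fix i j assume ij: "i < j" "j < n" "P i j"
    have "ereal (real (j - i)) * ?t < v (\<Sum>k\<in>{i..j}. Y $$ (i, k) * N $$ (k, j))"
    proof (rule val_sum_gt[OF dt_fin])
      fix k assume k: "k \<in> {i..j}"
      show "ereal (real (j - i)) * ?t < v (Y $$ (i, k) * N $$ (k, j))"
      proof (cases "k = j")
        case True
        then show ?thesis using N0 ij t_fin dt_fin by (simp add: less_top)
      next
        case False
        then have "k < j" using k by simp
        then have "ereal (real (j - i)) * ?t < ereal (real (k - i)) * ?t + ereal (real (j - k)) * ?s"
          using k less vM_on_neq_minf by (intro ereal_split_less_right) auto
        also have "\<dots> \<le> v (Y $$ (i, k) * N $$ (k, j))"
          using k ij interval_closedD[OF P \<open>P i j\<close>, of k] by (intro vM_on_mult_term_ge[OF Y N]) auto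
        finally show ?thesis .
      qed
    qed simp
    then show "ereal (real (j - i)) * ?t < v ((Y * N) $$ (i, j))" using ij by (simp add: FT_mult_entry[OF Y N])
  qed
qed

lemma vM_on_mult_eq_of_less:
  assumes X: "X \<in> FT n" and diag: "\<And>i. i < n \<Longrightarrow> X $$ (i, i) = e" and unit: "v e = 0"
    and Y: "Y \<in> FT n" and P: "interval_closed n P" and less: "vM_on v n P Y < vM_on v n P X"
  shows "vM_on v n P (X * Y) = vM_on v n P Y" and "vM_on v n P (Y * X) = vM_on v n P Y"
proof -
  define N where "N = X + (- e) \<cdot>\<^sub>m 1\<^sub>m n"
  have XC: "X \<in> carrier_mat n n" and YC: "Y \<in> carrier_mat n n"
    using X Y by (simp_all add: FT_carrier)
  have NC: "N \<in> carrier_mat n n" using XC unfolding N_def by simp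
  have N0: "N $$ (i, i) = 0" if "i < n" for i
    using that XC diag unfolding N_def by simp
  have N: "N \<in> FT n"
    using X N0 NC unfolding FT_def N_def by (auto intro!: exI[of _ 0])
  have "vM_on v n P N = vM_on v n P X"
    unfolding N_def using XC by (rule vM_on_add_scalar_one)
  then have NY: "vM_on v n P Y < vM_on v n P (N * Y)" and YN: "vM_on v n P Y < vM_on v n P (Y * N)"
    using vM_on_mult_gt[OF N N0 Y P] less by simp_all
  have X_split: "X = N + e \<cdot>\<^sub>m 1\<^sub>m n"
    using XC unfolding N_def by (intro eq_matI) auto
  have eY: "vM_on v n P (e \<cdot>\<^sub>m Y) = vM_on v n P Y"
    using YC unit by (rule vM_on_smult_unit)
  have "X * Y = e \<cdot>\<^sub>m Y + N * Y"
    using NC YC unfolding X_split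
    by (simp add: add_mult_distrib_mat[of _ n n] mult_smult_assoc_mat[of _ n n] comm_add_mat[of _ n n])
  then show "vM_on v n P (X * Y) = vM_on v n P Y"
    using vM_on_add_eq_left[of "e \<cdot>\<^sub>m Y" n "N * Y" P] NY YC NC eY by simp
  have "Y * X = e \<cdot>\<^sub>m Y + Y * N"
    using NC YC unfolding X_split
    by (simp add: mult_add_distrib_mat[of _ n n] mult_smult_distrib[OF YC one_carrier_mat]
        right_mult_one_mat[OF YC] comm_add_mat[of _ n n])
  then show "vM_on v n P (Y * X) = vM_on v n P Y"
    using vM_on_add_eq_left[of "e \<cdot>\<^sub>m Y" n "Y * N" P] YN YC NC eY by simp
qed

lemma vM_on_inverse:
  assumes X: "X \<in> FT n" and diag_X: "\<And>i. i < n \<Longrightarrow> X $$ (i, i) = e" and "v e = 0"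
    and B: "B \<in> FT n" and diag_B: "\<And>i. i < n \<Longrightarrow> B $$ (i, i) = e'" and "v e' = 0"
    and XB: "X * B = 1\<^sub>m n" and BX: "B * X = 1\<^sub>m n" and P: "interval_closed n P"
  shows "vM_on v n P B = vM_on v n P X"
proof (rule linorder_cases[of "vM_on v n P B" "vM_on v n P X"])
  assume "vM_on v n P B < vM_on v n P X"
  then have "vM_on v n P (X * B) = vM_on v n P B"
    using vM_on_mult_eq_of_less(1)[OF X diag_X \<open>v e = 0\<close> B P] by simp
  with \<open>vM_on v n P B < vM_on v n P X\<close> show ?thesis by (simp add: XB vM_on_one_mat)
next
  assume "vM_on v n P X < vM_on v n P B"
  then have "vM_on v n P (B * X) = vM_on v n P X"
    using vM_on_mult_eq_of_less(1)[OF B diag_B \<open>v e' = 0\<close> X P] by simp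
  with \<open>vM_on v n P X < vM_on v n P B\<close> show ?thesis by (simp add: BX vM_on_one_mat)
qed

lemma FT_vM_eq_infinity_iff:
  assumes "X \<in> FT n"
  shows "vM v n X = \<infinity> \<longleftrightarrow> is_diagonal_mat X"
  using assms unfolding vM_eq_vM_on vM_on_eq_infinity_iff is_diagonal_mat_def FT_def
  by (auto simp: neq_iff)

lemma vM_mult_nilpotent_ge:
  assumes X: "X \<in> FT n" and Y: "Y \<in> FT n" and "0 < n" and "nilpotent_mat X"
  shows "min (vM v n X) (vMt v n Y) \<le> vM v n (X * Y)"
    and "min (vM v n X) (vMt v n Y) \<le> vM v n (Y * X)"
proof -
  have X0: "\<forall>i<n. X $$ (i, i) = 0" using FT_nilpotent_diag[OF X] assms(3,4) by blast
  show "min (vM v n X) (vMt v n Y) \<le> vM v n (X * Y)"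
    unfolding vM_eq_vM_on vMt_eq_vM_on by (rule vM_on_mult_ge[OF X Y]) (use X0 in auto)
  show "min (vM v n X) (vMt v n Y) \<le> vM v n (Y * X)"
    unfolding vM_eq_vM_on vMt_eq_vM_on min.commute[of "vM_on v n _ X"]
    by (rule vM_on_mult_ge[OF Y X]) (use X0 in auto)
qed

lemma vM_mult_nilpotent_nilpotent_ge:
  assumes X: "X \<in> FT n" and Y: "Y \<in> FT n" and "0 < n"
    and "nilpotent_mat X" and "nilpotent_mat Y"
  shows "min (vMt v n X) (vMt v n Y) \<le> vM v n (X * Y)"
  unfolding vM_eq_vM_on vMt_eq_vM_on
  by (rule vM_on_mult_ge[OF X Y]) (use FT_nilpotent_diag[OF X] FT_nilpotent_diag[OF Y] assms(3-5) in auto)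

lemma FT_left_invertible_unit_diag:
  fixes X B :: "'a mat"
  assumes "prime p" and "CHAR('a) = p"
    and "X \<in> FT n" and "B \<in> carrier_mat n n" and "B * X = 1\<^sub>m n" and "0 < n"
  obtains e where "\<And>i. i < n \<Longrightarrow> X $$ (i, i) = e" and "v e = 0"
proof -
  obtain c b :: nat where "\<forall>i<n. X $$ (i, i) = of_nat c" and cb: "(of_nat c :: 'a) * of_nat b = 1"
    using FT_left_invertible_diag[OF assms] by blast
  moreover have "v (of_nat c) = 0"
    by (rule val_eq_0_if_mult_eq_1[OF cb val_of_nat_nonneg val_of_nat_nonneg])
  ultimately show thesis using that by blast
qed

lemma vM_on_mult_invertible_eq:
  fixes X Y :: "'a mat"
  assumes "prime p" and "CHAR('a) = p"
    and X: "X \<in> FT n" and "invertible_mat X" and Y: "Y \<in> FT n" and "0 < n"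
    and P: "interval_closed n P" and less: "vM_on v n P Y < vM_on v n P X"
  shows "vM_on v n P (X * Y) = vM_on v n P Y \<and> vM_on v n P (Y * X) = vM_on v n P Y"
proof -
  obtain B where "B \<in> carrier_mat n n" "B * X = 1\<^sub>m n"
    using FT_carrier[OF X] \<open>invertible_mat X\<close> by (rule invertible_matE)
  then obtain e where "\<And>i. i < n \<Longrightarrow> X $$ (i, i) = e" "v e = 0"
    using FT_left_invertible_unit_diag[OF assms(1,2) X] \<open>0 < n\<close> by blast
  then show ?thesis using vM_on_mult_eq_of_less[OF X _ _ Y P less] by blast
qed

lemma vM_on_inverse_FT:
  fixes X B :: "'a mat"
  assumes "prime p" and "CHAR('a) = p"
    and X: "X \<in> FT n" and BC: "B \<in> carrier_mat n n"
    and XB: "X * B = 1\<^sub>m n" and BX: "B * X = 1\<^sub>m n"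
    and "0 < n" and P: "interval_closed n P"
  shows "vM_on v n P B = vM_on v n P X"
proof -
  have B: "B \<in> FT n" using FT_left_inverse[OF assms(1,2) X BC BX \<open>0 < n\<close>] .
  obtain e where "\<And>i. i < n \<Longrightarrow> X $$ (i, i) = e" "v e = 0"
    using FT_left_invertible_unit_diag[OF assms(1,2) X BC BX \<open>0 < n\<close>] by blast
  moreover obtain e' where "\<And>i. i < n \<Longrightarrow> B $$ (i, i) = e'" "v e' = 0"
    using FT_left_invertible_unit_diag[OF assms(1,2) B FT_carrier[OF X] XB \<open>0 < n\<close>] by blast
  ultimately show ?thesis using vM_on_inverse[OF X _ _ B _ _ XB BX P] by blast
qed

lemma vM_smult_ge:
  assumes X: "X \<in> FT n" and "v \<gamma> = ereal (of_int c)"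
  shows "ereal (min (of_int c / real (n - 1)) (of_int c)) + vM v n X \<le> vM v n (\<gamma> \<cdot>\<^sub>m X)"
  unfolding vM_eq_vM_on
proof (rule vM_on_smult_ge[OF FT_carrier[OF X] eq_refl[OF assms(2)[symmetric]]])
  fix i j assume "i < j" "j < n"
  then have "1 \<le> real (j - i)" "real (j - i) \<le> real (n - 1)" by auto
  then show "real (j - i) * min (of_int c / real (n - 1)) (of_int c) \<le> of_int c"
    by (rule mult_min_div_le)
qed

lemma vMt_smult_ge:
  assumes X: "X \<in> FT n" and "v \<gamma> = ereal (of_int c)" and "3 \<le> n"
  shows "ereal (min (of_int c / real (n - 2)) (of_int c)) + vMt v n X \<le> vMt v n (\<gamma> \<cdot>\<^sub>m X)"
  unfolding vMt_eq_vM_on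
proof (rule vM_on_smult_ge[OF FT_carrier[OF X] eq_refl[OF assms(2)[symmetric]]])
  fix i j assume "i < j" "j < n" "(i, j) \<noteq> (0, n - 1)"
  then have "1 \<le> real (j - i)" "real (j - i) \<le> real (n - 2)" by auto
  then show "real (j - i) * min (of_int c / real (n - 2)) (of_int c) \<le> of_int c"
    by (rule mult_min_div_le)
qed

end

theorem lemma3:
  fixes v :: "'a::field \<Rightarrow> ereal" and p n :: nat and X Y :: "'a mat"
  assumes p: "prime p" and char: "CHAR('a) = p"
    and dv: "discrete_valuation v"
    and n: "n \<ge> 2"
    and X: "X \<in> FT n" and Y: "Y \<in> FT n"
  shows
    \<comment> \<open>(i)\<close>
    "(vM v n X = \<infinity> \<longleftrightarrow> is_diagonal_mat X)
   \<and> \<comment> \<open>(ii)\<close>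
     vMt v n X \<ge> vM v n X
   \<and> \<comment> \<open>(iii)\<close>
     (\<forall>a b :: nat.
        vM v n (of_nat a \<cdot>\<^sub>m X + of_nat b \<cdot>\<^sub>m Y) \<ge> min (vM v n X) (vM v n Y)
      \<and> vMt v n (of_nat a \<cdot>\<^sub>m X + of_nat b \<cdot>\<^sub>m Y) \<ge> min (vMt v n X) (vMt v n Y))
   \<and> (\<forall>k :: int. vM v n (X + of_int k \<cdot>\<^sub>m 1\<^sub>m n) = vM v n X
               \<and> vMt v n (X + of_int k \<cdot>\<^sub>m 1\<^sub>m n) = vMt v n X)
   \<and> \<comment> \<open>(iv)\<close>
     vM v n (frob_mat p X) = ereal (real p) * vM v n X
   \<and> vMt v n (frob_mat p X) = ereal (real p) * vMt v n X
   \<and> \<comment> \<open>(v)\<close>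
     vM v n (X * Y) \<ge> min (vM v n X) (vM v n Y)
   \<and> vMt v n (X * Y) \<ge> min (vMt v n X) (vMt v n Y)
   \<and> \<comment> \<open>(vi)\<close>
     (nilpotent_mat X \<longrightarrow>
        vM v n (X * Y) \<ge> min (vM v n X) (vMt v n Y)
      \<and> vM v n (Y * X) \<ge> min (vM v n X) (vMt v n Y))
   \<and> \<comment> \<open>(vii)\<close>
     (nilpotent_mat X \<and> nilpotent_mat Y \<longrightarrow>
        vM v n (X * Y) \<ge> min (vMt v n X) (vMt v n Y))
   \<and> \<comment> \<open>(viii)\<close>
     (invertible_mat X \<and> vM v n X > vM v n Y \<longrightarrow>
        vM v n (X * Y) = vM v n Y \<and> vM v n (Y * X) = vM v n Y)
   \<and> \<comment> \<open>(ix)\<close>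
     (invertible_mat X \<and> vMt v n X > vMt v n Y \<longrightarrow>
        vMt v n (X * Y) = vMt v n Y \<and> vMt v n (Y * X) = vMt v n Y)
   \<and> \<comment> \<open>(x)\<close>
     (\<forall>B \<in> carrier_mat n n. X * B = 1\<^sub>m n \<and> B * X = 1\<^sub>m n \<longrightarrow>
        vM v n B = vM v n X \<and> vMt v n B = vMt v n X)
   \<and> \<comment> \<open>(xi)\<close>
     (\<forall>(c::int) (\<gamma>::'a). nilpotent_mat X \<and> v \<gamma> = ereal (of_int c) \<longrightarrow>
        vM v n (\<gamma> \<cdot>\<^sub>m X)
          \<ge> ereal (min (of_int c / real (n - 1)) (of_int c)) + vM v n X
      \<and> (n \<ge> 3 \<longrightarrow> vMt v n (\<gamma> \<cdot>\<^sub>m X)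
          \<ge> ereal (min (of_int c / real (n - 2)) (of_int c)) + vMt v n X))"
proof -
  interpret discretely_valued v using dv by unfold_locales
  have n0: "0 < n" using n by simp
  have XC: "X \<in> carrier_mat n n" and YC: "Y \<in> carrier_mat n n"
    using X Y by (simp_all add: FT_carrier)
  note closed = interval_closed_True interval_closed_off_corner
  show ?thesis
    using FT_vM_eq_infinity_iff[OF X]
      vM_on_antimono[of "\<lambda>i j. (i, j) \<noteq> (0, n - 1)" "\<lambda>_ _. True"]
      vM_on_of_nat_combination_ge[OF XC YC] vM_on_add_scalar_one[OF XC]
      vM_on_frob_mat[OF XC prime_gt_0_nat[OF p]]
      vM_on_mult_ge_min[OF X Y closed(1)] vM_on_mult_ge_min[OF X Y closed(2)]
      vM_mult_nilpotent_ge[OF X Y n0] vM_mult_nilpotent_nilpotent_ge[OF X Y n0]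
      vM_on_mult_invertible_eq[OF p char X _ Y n0 closed(1)]
      vM_on_mult_invertible_eq[OF p char X _ Y n0 closed(2)]
      vM_on_inverse_FT[OF p char X _ _ _ n0 closed(1)]
      vM_on_inverse_FT[OF p char X _ _ _ n0 closed(2)]
      vM_smult_ge[OF X] vMt_smult_ge[OF X]
    unfolding vM_eq_vM_on vMt_eq_vM_on by simp
qed

end
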